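(* Let $(U,\tau_R,\rho)$ be a general ordered topological approximation space and $A\subseteq U$. If $A$ is $R$-increasing exact, i.e. $\underline{R}_{Inc}(A)=\overline{R}^{Inc}(A)$, then $A$ is $P$-increasing exact, i.e. $\underline{P}_{Inc}(A)=\overline{P}^{Inc}(A)$. Likewise, if $\underline{R}_{Dec}(A)=\overline{R}^{Dec}(A)$, then $\underline{P}_{Dec}(A)=\overline{P}^{Dec}(A)$.
   Context: A general ordered topological approximation space (GOTAS) is a triple $(U,\tau_R,\rho)$ where $U$ is a non-empty set, $R$ is a binary relation on $U$, $\tau_R$ is a topology on $U$ generated by $R$, and $\rho$ is a partial order on $U$. A subset $A\subseteq U$ is increasing (resp. decreasing) if whenever $a\in A$, $x\in U$ and $a\,\rho\,x$ (resp. $x\,\rho\,a$), then $x\in A$. For $A\subseteq U$: $\underline{R}_{Inc}(A)$ is the greatest subset of $A$ that is both $\tau_R$-open and increasing; $\underline{R}_{Dec}(A)$ is the greatest subset of $A$ that is $\tau_R$-open and decreasing; $\overline{R}^{Inc}(A)$ is the smallest superset of $A$ that is $\tau_R$-closed and increasing; $\overline{R}^{Dec}(A)$ is the smallest superset of $A$ that is $\tau_R$-closed and decreasing. Define $\underline{P}_{Inc}(A)=A\cap\underline{R}_{Inc}(\overline{R}^{Inc}(A))$, $\overline{P}^{Inc}(A)=A\cup\overline{R}^{Inc}(\underline{R}_{Inc}(A))$, $\underline{P}_{Dec}(A)=A\cap\underline{R}_{Dec}(\overline{R}^{Dec}(A))$, $\overline{P}^{Dec}(A)=A\cup\overline{R}^{Dec}(\underline{R}_{Dec}(A))$.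 *)

theory Defs
  imports "HOL-Analysis.Analysis"
begin

text \<open>Topology on U generated by a binary relation R on U: subbase consisting of the
  after-sets xR = R``{x} (x in U), together with U itself (so the topology lives on U).\<close>
definition tau_R :: "'a set \<Rightarrow> ('a \<times> 'a) set \<Rightarrow> 'a topology" where
  "tau_R U R = topology_generated_by (insert U {R `` {x} | x. x \<in> U})"

definition increasing_set :: "'a set \<Rightarrow> ('a \<times> 'a) set \<Rightarrow> 'a set \<Rightarrow> bool" where
  "increasing_set U \<rho> A \<longleftrightarrow> (\<forall>a\<in>A. \<forall>x\<in>U. (a, x) \<in> \<rho> \<longrightarrow> x \<in> A)"

definition decreasing_set :: "'a set \<Rightarrow> ('a \<times> 'a) set \<Rightarrow> 'a set \<Rightarrow> bool" where
  "decreasing_set U \<rho> A \<longleftrightarrow> (\<forall>a\<in>A. \<forall>x\<in>U. (x, a) \<in> \<rho> \<longrightarrow> x \<in> A)"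

definition R_low_Inc :: "'a topology \<Rightarrow> ('a \<times> 'a) set \<Rightarrow> 'a set \<Rightarrow> 'a set" where
  "R_low_Inc T \<rho> A = \<Union>{G. G \<subseteq> A \<and> openin T G \<and> increasing_set (topspace T) \<rho> G}"

definition R_up_Inc :: "'a topology \<Rightarrow> ('a \<times> 'a) set \<Rightarrow> 'a set \<Rightarrow> 'a set" where
  "R_up_Inc T \<rho> A = \<Inter>{F. A \<subseteq> F \<and> closedin T F \<and> increasing_set (topspace T) \<rho> F}"

definition R_low_Dec :: "'a topology \<Rightarrow> ('a \<times> 'a) set \<Rightarrow> 'a set \<Rightarrow> 'a set" where
  "R_low_Dec T \<rho> A = \<Union>{G. G \<subseteq> A \<and> openin T G \<and> decreasing_set (topspace T) \<rho> G}"

definition R_up_Dec :: "'a topology \<Rightarrow> ('a \<times> 'a) set \<Rightarrow> 'a set \<Rightarrow> 'a set" where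
  "R_up_Dec T \<rho> A = \<Inter>{F. A \<subseteq> F \<and> closedin T F \<and> decreasing_set (topspace T) \<rho> F}"

definition P_low_Inc :: "'a topology \<Rightarrow> ('a \<times> 'a) set \<Rightarrow> 'a set \<Rightarrow> 'a set" where
  "P_low_Inc T \<rho> A = A \<inter> R_low_Inc T \<rho> (R_up_Inc T \<rho> A)"

definition P_up_Inc :: "'a topology \<Rightarrow> ('a \<times> 'a) set \<Rightarrow> 'a set \<Rightarrow> 'a set" where
  "P_up_Inc T \<rho> A = A \<union> R_up_Inc T \<rho> (R_low_Inc T \<rho> A)"

definition P_low_Dec :: "'a topology \<Rightarrow> ('a \<times> 'a) set \<Rightarrow> 'a set \<Rightarrow> 'a set" where
  "P_low_Dec T \<rho> A = A \<inter> R_low_Dec T \<rho> (R_up_Dec T \<rho> A)"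

definition P_up_Dec :: "'a topology \<Rightarrow> ('a \<times> 'a) set \<Rightarrow> 'a set \<Rightarrow> 'a set" where
  "P_up_Dec T \<rho> A = A \<union> R_up_Dec T \<rho> (R_low_Dec T \<rho> A)"

end

theory Submission
  imports Defs
begin

text \<open>Since the lower approximation of A lies inside A and the upper one contains A, their
  equality forces both to be A itself. The P-approximations are then
  A \<inter> A and A \<union> A.\<close>

lemma R_low_Inc_subset: "R_low_Inc T \<rho> A \<subseteq> A"
  unfolding R_low_Inc_def by blast

lemma R_up_Inc_supset: "A \<subseteq> R_up_Inc T \<rho> A"
  unfolding R_up_Inc_def by blast

lemma R_low_Dec_subset: "R_low_Dec T \<rho> A \<subseteq> A"
  unfolding R_low_Dec_def by blast

lemma R_up_Dec_supset: "A \<subseteq> R_up_Dec T \<rho> A"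
  unfolding R_up_Dec_def by blast

lemma R_Inc_exact_eq:
  assumes "R_low_Inc T \<rho> A = R_up_Inc T \<rho> A"
  shows "R_low_Inc T \<rho> A = A" and "R_up_Inc T \<rho> A = A"
  using R_low_Inc_subset[of T \<rho> A] R_up_Inc_supset[of A T \<rho>] assms by auto

lemma R_Dec_exact_eq:
  assumes "R_low_Dec T \<rho> A = R_up_Dec T \<rho> A"
  shows "R_low_Dec T \<rho> A = A" and "R_up_Dec T \<rho> A = A"
  using R_low_Dec_subset[of T \<rho> A] R_up_Dec_supset[of A T \<rho>] assms by auto

lemma P_Inc_exact_if_R_Inc_exact:
  assumes "R_low_Inc T \<rho> A = R_up_Inc T \<rho> A"
  shows "P_low_Inc T \<rho> A = P_up_Inc T \<rho> A"
  unfolding P_low_Inc_def P_up_Inc_def R_Inc_exact_eq[OF assms] by simp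

lemma P_Dec_exact_if_R_Dec_exact:
  assumes "R_low_Dec T \<rho> A = R_up_Dec T \<rho> A"
  shows "P_low_Dec T \<rho> A = P_up_Dec T \<rho> A"
  unfolding P_low_Dec_def P_up_Dec_def R_Dec_exact_eq[OF assms] by simp

theorem proposition3p10:
  fixes U :: "'a set" and R \<rho> :: "('a \<times> 'a) set" and A :: "'a set"
  assumes "U \<noteq> {}"
    and "R \<subseteq> U \<times> U"
    and "partial_order_on U \<rho>"
    and "A \<subseteq> U"
  shows "(R_low_Inc (tau_R U R) \<rho> A = R_up_Inc (tau_R U R) \<rho> A
            \<longrightarrow> P_low_Inc (tau_R U R) \<rho> A = P_up_Inc (tau_R U R) \<rho> A)
       \<and> (R_low_Dec (tau_R U R) \<rho> A = R_up_Dec (tau_R U R) \<rho> A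
            \<longrightarrow> P_low_Dec (tau_R U R) \<rho> A = P_up_Dec (tau_R U R) \<rho> A)"
  using P_Inc_exact_if_R_Inc_exact P_Dec_exact_if_R_Dec_exact by blast

end
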